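(* Let $t\ge 1$ and $n\ge 1$ be integers and let $\mathcal{C}\subseteq\{0,1\}^n$ be a $t$-break-resilient code. For $i\in\{0,1,\ldots,n\}$ let $\mathcal{C}_i$ be the set of codewords of $\mathcal{C}$ of Hamming weight $i$, so that $\mathcal{C}=\mathcal{C}_0\cup\mathcal{C}_1\cup\cdots\cup\mathcal{C}_n$. Then for every $i\in\{1,\ldots,n\}$, the minimum Hamming distance of $\mathcal{C}_i$ is at least $\lceil\frac{t+1}{2}\rceil$ (i.e., any two distinct words of $\mathcal{C}_i$ differ in at least $\lceil\frac{t+1}{2}\rceil$ coordinates).
   Context: Breaking a binary string $\mathbf{x}\in\{0,1\}^n$ at $s\le t$ positions means choosing $s$ cut points between consecutive entries, producing $s+1$ (nonempty) consecutive substrings called fragments; the fragments are oriented (each is read left to right as in $\mathbf{x}$) but are given as an unordered multiset. Two words $\mathbf{x},\mathbf{y}\in\{0,1\}^n$ are $t$-confusable if there exist at most $t$ break positions in $\mathbf{x}$ and at most $t$ break positions in $\mathbf{y}$ that produce the same multiset of fragments. A code $\mathcal{C}\subseteq\{0,1\}^n$ is a $t$-break-resilient code ($t$-BRC) if no two distinct codewords of $\mathcal{C}$ are $t$-confusable, i.e., every codeword can be uniquely recovered from the unordered multiset of at most $t+1$ fragments resulting from any at most $t$ breaks. *)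

theory Defs
  imports Main "HOL-Library.Multiset"
begin

text \<open>Binary words of length n are modelled as boolean lists of length n
  (True = 1, False = 0).\<close>

definition words :: "nat \<Rightarrow> bool list set" where
  "words n = {x. length x = n}"

text \<open>A breaking of x at at most t positions: a list of nonempty consecutive
  fragments whose concatenation (in order) is x, with at most t+1 fragments
  (i.e. at most t cut points). The result is the unordered multiset of fragments.\<close>

definition breaking :: "nat \<Rightarrow> bool list \<Rightarrow> bool list list \<Rightarrow> bool" where
  "breaking t x fs \<longleftrightarrow> concat fs = x \<and> (\<forall>f\<in>set fs. f \<noteq> []) \<and> length fs \<le> t + 1"

definition confusable :: "nat \<Rightarrow> bool list \<Rightarrow> bool list \<Rightarrow> bool" where
  "confusable t x y \<longleftrightarrow>
     (\<exists>fs gs. breaking t x fs \<and> breaking t y gs \<and> mset fs = mset gs)"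

definition break_resilient :: "nat \<Rightarrow> nat \<Rightarrow> bool list set \<Rightarrow> bool" where
  "break_resilient n t C \<longleftrightarrow> C \<subseteq> words n \<and>
     (\<forall>x\<in>C. \<forall>y\<in>C. x \<noteq> y \<longrightarrow> \<not> confusable t x y)"

definition hamming_weight :: "bool list \<Rightarrow> nat" where
  "hamming_weight x = length (filter id x)"

definition hamming_dist :: "bool list \<Rightarrow> bool list \<Rightarrow> nat" where
  "hamming_dist x y = card {i. i < length x \<and> x ! i \<noteq> y ! i}"

definition weight_class :: "bool list set \<Rightarrow> nat \<Rightarrow> bool list set" where
  "weight_class C i = {x\<in>C. hamming_weight x = i}"

end

theory Submission
  imports Defs
begin

text \<open>Two words of the same length and weight at Hamming distance \<open>d\<close> can be cut
  simultaneously into at most \<open>2 d + 1\<close> aligned pieces: maximal common blocks,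
  and single positions where one word reads 1 and the other 0.  Equal weight forces
  as many \<open>(1,0)\<close> as \<open>(0,1)\<close> positions, so both words yield the same multiset of
  fragments.  Hence distinct codewords of equal weight at distance \<open>d\<close> with
  \<open>2 d \<le> t\<close> would be \<open>t\<close>-confusable, and so the distance is at least
  \<open>\<lceil>(t+1)/2\<rceil>\<close>.\<close>

lemma hamming_dist_conv_filter_zip:
  assumes "length x = length y"
  shows "hamming_dist x y = length (filter (\<lambda>(a, b). a \<noteq> b) (zip x y))"
  unfolding hamming_dist_def length_filter_conv_card
  using assms by (intro arg_cong[where f = card]) auto

lemma hamming_dist_Cons:
  "length as = length bs \<Longrightarrow>
   hamming_dist (a # as) (b # bs) = (if a \<noteq> b then 1 else 0) + hamming_dist as bs"
  by (simp add: hamming_dist_conv_filter_zip)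

lemma hamming_weight_concat:
  "hamming_weight (concat xss) = sum_list (map hamming_weight xss)"
  by (induction xss) (auto simp: hamming_weight_def)

fun aligned_pieces :: "bool list \<Rightarrow> bool list \<Rightarrow> (bool list \<times> bool list) list" where
  "aligned_pieces (a # as) (b # bs) =
     (let r = aligned_pieces as bs in
      if a = b \<and> r \<noteq> [] \<and> fst (hd r) = snd (hd r)
      then (a # fst (hd r), b # snd (hd r)) # tl r
      else ([a], [b]) # r)"
| "aligned_pieces _ _ = []"

definition aligned_piece :: "bool list \<times> bool list \<Rightarrow> bool" where
  "aligned_piece q \<longleftrightarrow>
     (fst q = snd q \<and> fst q \<noteq> []) \<or> q = ([True], [False]) \<or> q = ([False], [True])"

lemma concat_aligned_pieces:
  assumes "length xs = length ys"
  shows "concat (map fst (aligned_pieces xs ys)) = xs"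
    and "concat (map snd (aligned_pieces xs ys)) = ys"
  using assms
  by (induction xs ys rule: aligned_pieces.induct)
     (auto simp: Let_def neq_Nil_conv split: if_splits)

lemma aligned_pieces_aligned: "\<forall>q\<in>set (aligned_pieces xs ys). aligned_piece q"
proof (induction xs ys rule: aligned_pieces.induct)
  case (1 a as b bs)
  have "aligned_piece ([a], [b])"
    by (cases a; cases b) (simp_all add: aligned_piece_def)
  moreover have "aligned_piece (a # c, a # c)" for c
    by (simp add: aligned_piece_def)
  ultimately show ?case
    using "1" by (auto simp: Let_def neq_Nil_conv)
qed simp_all

text \<open>Common blocks are never adjacent, so a piece list that starts with a mismatch
  saves one piece; this sharper bound is what makes the induction go through.\<close>

lemma length_aligned_pieces_le:
  assumes "length xs = length ys"
  shows "length (aligned_pieces xs ys) + (case aligned_pieces xs ys of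
           [] \<Rightarrow> 1 | q # _ \<Rightarrow> if fst q = snd q then 0 else 1) \<le> 2 * hamming_dist xs ys + 1"
  using assms
proof (induction xs ys rule: aligned_pieces.induct)
  case (1 a as b bs)
  then show ?case
    by (cases "aligned_pieces as bs")
       (auto simp: Let_def hamming_dist_Cons split: if_splits)
qed (simp_all add: hamming_dist_def)

lemma weight_balance_aligned:
  assumes "\<forall>q\<in>set p. aligned_piece q"
  shows "sum_list (map (hamming_weight \<circ> fst) p) + count (mset p) ([False], [True])
       = sum_list (map (hamming_weight \<circ> snd) p) + count (mset p) ([True], [False])"
  using assms by (induction p) (auto simp: aligned_piece_def hamming_weight_def)

lemma fragment_balance_aligned:
  assumes "\<forall>q\<in>set p. aligned_piece q"
  shows "mset (map fst p) + replicate_mset (count (mset p) ([False], [True])) [True]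
           + replicate_mset (count (mset p) ([True], [False])) [False]
       = mset (map snd p) + replicate_mset (count (mset p) ([True], [False])) [True]
           + replicate_mset (count (mset p) ([False], [True])) [False]"
  using assms by (induction p) (auto simp: aligned_piece_def add_mset_commute)

lemma confusable_if_same_weight_close:
  assumes "length x = length y" and "hamming_weight x = hamming_weight y"
    and "2 * hamming_dist x y \<le> t"
  shows "confusable t x y"
proof -
  define p where "p = aligned_pieces x y"
  have fst_p: "concat (map fst p) = x" and snd_p: "concat (map snd p) = y"
    using concat_aligned_pieces[OF assms(1)] by (simp_all add: p_def)
  have aligned: "\<forall>q\<in>set p. aligned_piece q"
    using aligned_pieces_aligned by (simp add: p_def)
  have "length p \<le> t + 1"
    using length_aligned_pieces_le[OF assms(1)] assms(3) unfolding p_def by linarith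
  then have "breaking t x (map fst p)" and "breaking t y (map snd p)"
    using fst_p snd_p aligned by (auto simp: breaking_def aligned_piece_def)
  moreover have "count (mset p) ([False], [True]) = count (mset p) ([True], [False])"
    using weight_balance_aligned[OF aligned] assms(2)
      hamming_weight_concat[of "map fst p"] hamming_weight_concat[of "map snd p"]
    by (simp add: fst_p snd_p)
  then have "mset (map fst p) = mset (map snd p)"
    using fragment_balance_aligned[OF aligned] by simp
  ultimately show ?thesis
    unfolding confusable_def by blast
qed

theorem lemma1:
  fixes n t :: nat and C :: "bool list set"
  assumes "t \<ge> 1" and "n \<ge> 1"
    and "break_resilient n t C"
  shows "\<forall>i\<in>{1..n}. \<forall>x\<in>weight_class C i. \<forall>y\<in>weight_class C i.
           x \<noteq> y \<longrightarrow> hamming_dist x y \<ge> (t + 2) div 2"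
proof (intro ballI impI)
  fix i x y
  assume x: "x \<in> weight_class C i" and y: "y \<in> weight_class C i" and "x \<noteq> y"
  then have "\<not> confusable t x y"
    using assms(3) by (auto simp: break_resilient_def weight_class_def)
  moreover have "length x = length y" and "hamming_weight x = hamming_weight y"
    using x y assms(3) by (auto simp: break_resilient_def weight_class_def words_def)
  ultimately have "\<not> 2 * hamming_dist x y \<le> t"
    using confusable_if_same_weight_close by blast
  then show "hamming_dist x y \<ge> (t + 2) div 2"
    by linarith
qed

end
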